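(* Let $A$ be a nonempty set of positive integers, let $s\in A$ and let $n$ be a positive integer. Then $$\sum_{j\ge0}(-1)^jN^q_A(n-js)=N^q_{A\setminus\{s\}}(n)+\sum_{j\ge1}(-1)^{j-1}q_{A\setminus\{s\}}(n-js),$$ i.e. $N^q_A(n)-N^q_A(n-s)+N^q_A(n-2s)-\cdots=N^q_{A\setminus\{s\}}(n)+q_{A\setminus\{s\}}(n-s)-q_{A\setminus\{s\}}(n-2s)+\cdots$.
   Context: For a set $B$ of positive integers, $N^q_B(m)$ is the total number of parts, summed over all partitions of $m$ into pairwise distinct parts from $B$, and $q_B(m)$ is the number of such partitions. Conventions: $q_B(0)=1$, $N^q_B(0)=0$, $q_B(m)=N^q_B(m)=0$ for $m<0$. *)

theory Defs
  imports Main
begin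

definition distinct_partitions :: "nat set \<Rightarrow> nat \<Rightarrow> nat set set" where
  "distinct_partitions B m = {P. finite P \<and> P \<subseteq> B \<and> \<Sum>P = m}"

definition q_count :: "nat set \<Rightarrow> int \<Rightarrow> int" where
  "q_count B m = (if m < 0 then 0 else int (card (distinct_partitions B (nat m))))"

definition Nq_count :: "nat set \<Rightarrow> int \<Rightarrow> int" where
  "Nq_count B m = (if m < 0 then 0
     else int (\<Sum>P\<in>distinct_partitions B (nat m). card P))"

end

theory Submission
  imports Defs
begin

text \<open>Sorting the partitions of \<open>m\<close> into parts from \<open>A\<close> by whether they use the part \<open>s\<close>
  gives \<open>N(A, m) = N(A - {s}, m) + N(A - {s}, m - s) + q(A - {s}, m - s)\<close>, because adding
  \<open>s\<close> to a partition of \<open>m - s\<close> adds exactly one part. Substituted into the alternating sum,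
  the \<open>N(A - {s}, _)\<close> terms telescope and only the \<open>q(A - {s}, _)\<close> terms survive; every sum
  stops once its argument turns negative.\<close>

lemma finite_distinct_partitions: "finite (distinct_partitions B m)"
proof (rule finite_subset)
  show "distinct_partitions B m \<subseteq> Pow {..m}"
    unfolding distinct_partitions_def using member_le_sum[where f = "\<lambda>x. x"] by fastforce
qed simp

lemma distinct_partitions_without_part:
  "{P \<in> distinct_partitions A m. s \<notin> P} = distinct_partitions (A - {s}) m"
  unfolding distinct_partitions_def by auto

lemma distinct_partitions_with_part:
  assumes "s \<in> A" and "s \<le> m"
  shows "{P \<in> distinct_partitions A m. s \<in> P} = insert s ` distinct_partitions (A - {s}) (m - s)"
proof (intro set_eqI iffI)
  fix P assume "P \<in> {P \<in> distinct_partitions A m. s \<in> P}"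
  then have P: "finite P" "P \<subseteq> A" "\<Sum>P = m" "s \<in> P"
    by (auto simp: distinct_partitions_def)
  then have "\<Sum>(P - {s}) = m - s"
    by (simp add: sum_diff1_nat)
  with P have "P - {s} \<in> distinct_partitions (A - {s}) (m - s)"
    by (auto simp: distinct_partitions_def)
  with \<open>s \<in> P\<close> show "P \<in> insert s ` distinct_partitions (A - {s}) (m - s)"
    by (metis image_eqI insert_Diff)
next
  fix P assume "P \<in> insert s ` distinct_partitions (A - {s}) (m - s)"
  then obtain Q where Q: "finite Q" "Q \<subseteq> A - {s}" "\<Sum>Q = m - s" and "P = insert s Q"
    by (auto simp: distinct_partitions_def)
  moreover from Q have "s \<notin> Q"
    by blast
  ultimately show "P \<in> {P \<in> distinct_partitions A m. s \<in> P}"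
    using assms by (auto simp: distinct_partitions_def)
qed

lemma distinct_partitions_with_large_part:
  assumes "m < s"
  shows "{P \<in> distinct_partitions A m. s \<in> P} = {}"
  using assms member_le_sum[where f = "\<lambda>x. x" and i = s]
  by (fastforce simp: distinct_partitions_def)

lemma sum_distinct_partitions_split_part:
  "(\<Sum>P\<in>distinct_partitions A m. f P)
     = (\<Sum>P | P \<in> distinct_partitions A m \<and> s \<in> P. f P)
       + (\<Sum>P\<in>distinct_partitions (A - {s}) m. f P)"
proof -
  have "distinct_partitions A m - {P. s \<in> P} = distinct_partitions (A - {s}) m"
    unfolding distinct_partitions_def by auto
  then show ?thesis
    using sum.Int_Diff[OF finite_distinct_partitions, of f A m "{P. s \<in> P}"]
    by (simp add: Int_def)
qed

lemma sum_card_distinct_partitions_remove_part: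
  assumes "s \<in> A" and "s \<le> m"
  shows "(\<Sum>P\<in>distinct_partitions A m. card P)
           = (\<Sum>P\<in>distinct_partitions (A - {s}) m. card P)
             + (\<Sum>P\<in>distinct_partitions (A - {s}) (m - s). card P)
             + card (distinct_partitions (A - {s}) (m - s))"
proof -
  let ?Q = "distinct_partitions (A - {s}) (m - s)"
  have inj: "inj_on (insert s) ?Q"
    unfolding inj_on_def distinct_partitions_def by blast
  have "(\<Sum>P | P \<in> distinct_partitions A m \<and> s \<in> P. card P) = (\<Sum>P\<in>?Q. card (insert s P))"
    using distinct_partitions_with_part[OF assms] sum.reindex[OF inj] by simp
  also have "\<dots> = (\<Sum>P\<in>?Q. card P + 1)"
    by (intro sum.cong) (auto simp: distinct_partitions_def subset_eq)
  also have "\<dots> = (\<Sum>P\<in>?Q. card P) + card ?Q"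
    by (subst sum.distrib) simp
  finally show ?thesis
    using sum_distinct_partitions_split_part[of card A m s] by simp
qed

lemma Nq_count_remove_part:
  assumes "s \<in> A"
  shows "Nq_count A m
           = Nq_count (A - {s}) m + Nq_count (A - {s}) (m - int s) + q_count (A - {s}) (m - int s)"
proof (cases "m < int s")
  case True
  then have "(\<Sum>P\<in>distinct_partitions A (nat m). card P)
               = (\<Sum>P\<in>distinct_partitions (A - {s}) (nat m). card P)" if "m \<ge> 0"
    using that sum_distinct_partitions_split_part[of card A "nat m" s]
    by (simp add: distinct_partitions_with_large_part)
  with True show ?thesis
    by (simp add: Nq_count_def q_count_def)
next
  case False
  then have "nat (m - int s) = nat m - s" and "s \<le> nat m"
    by simp_all
  with False show ?thesis
    using sum_card_distinct_partitions_remove_part[OF assms]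
    by (simp add: Nq_count_def q_count_def)
qed

lemma alternating_sum_telescope:
  fixes f g F :: "nat \<Rightarrow> 'a :: comm_ring_1"
  assumes "\<And>j. F j = f j + f (Suc j) + g (Suc j)"
  shows "(\<Sum>j\<le>k. (-1)^j * F j)
           = f 0 + (-1)^k * f (Suc k) + (\<Sum>j\<in>{1..Suc k}. (-1)^(j-1) * g j)"
  by (induction k) (auto simp: assms algebra_simps)

theorem theorem6:
  fixes A :: "nat set" and s n :: nat
  assumes "A \<noteq> {}" and "\<forall>a\<in>A. a > 0" and "s \<in> A" and "n > 0"
  shows "(\<Sum>j\<le>n. (-1)^j * Nq_count A (int n - int j * int s))
       = Nq_count (A - {s}) (int n)
         + (\<Sum>j\<in>{1..n}. (-1)^(j-1) * q_count (A - {s}) (int n - int j * int s))"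
proof -
  define f where "f j = Nq_count (A - {s}) (int n - int j * int s)" for j
  define g where "g j = q_count (A - {s}) (int n - int j * int s)" for j
  \<comment> \<open>Positivity of \<open>s\<close> only makes the sums terminate.\<close>
  have "s > 0"
    using assms by blast
  then have "n < Suc n * s"
    by (cases s) simp_all
  then have "int n < int (Suc n) * int s"
    by (metis of_nat_less_iff of_nat_mult)
  then have "f (Suc n) = 0" and "g (Suc n) = 0"
    by (simp_all add: f_def g_def Nq_count_def q_count_def)
  have "Nq_count A (int n - int j * int s) = f j + f (Suc j) + g (Suc j)" for j
    using Nq_count_remove_part[OF \<open>s \<in> A\<close>, of "int n - int j * int s"]
    by (simp add: f_def g_def algebra_simps)
  then have "(\<Sum>j\<le>n. (-1)^j * Nq_count A (int n - int j * int s))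
               = f 0 + (-1)^n * f (Suc n) + (\<Sum>j\<in>{1..Suc n}. (-1)^(j-1) * g j)"
    by (rule alternating_sum_telescope)
  also have "\<dots> = f 0 + (\<Sum>j\<in>{1..n}. (-1)^(j-1) * g j)"
    using \<open>f (Suc n) = 0\<close> \<open>g (Suc n) = 0\<close> by simp
  finally show ?thesis
    by (simp add: f_def g_def)
qed

end
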